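(* Let $c\ge3$ be an integer, let $c'$ be the largest odd integer with $c'\le c$, and let $\mathcal{P}$ be a finite bias distribution. (1) If $E_p[f_{c',x}(p)]=0$ for all $1\le x\le(c'-1)/2$, then $\mathcal{P}$ is $c$-indistinguishable. (2) If $\mathcal{P}$ is $(c'-2)$-indistinguishable and $E_p[f_{c',x_0}(p)]=0$ for at least one $x_0$ with $1\le x_0\le c'-1$, then $\mathcal{P}$ is $c$-indistinguishable. In particular, $\mathcal{P}$ is $c$-indistinguishable if for each odd $\ell$ with $3\le\ell\le c'$ there exists $x_\ell$ with $1\le x_\ell\le\ell-1$ and $E_p[f_{\ell,x_\ell}(p)]=0$.
   Context: A finite bias distribution is a probability distribution $\mathcal{P}$ supported on a finite subset of $(0,1)$ that is symmetric: it outputs $a$ and $1-a$ with the same probability. $E_p$ is expectation over $p\sim\mathcal{P}$. $\sigma(p)=\sqrt{(1-p)/p}$; for integers $\ell\ge1$, $0\le x\le\ell$, $f_{\ell,x}(p)=p^x(1-p)^{\ell-x}(x\sigma(p)-(\ell-x)\sigma(1-p))$ and $R_{\ell,x}=\max\{0,E_p[f_{\ell,x}(p)]\}$. For a positive integer $c$, $\mathcal{P}$ is $c$-indistinguishable if $\sum_{x=1}^{\ell-1}\binom{\ell}{x}R_{\ell,x}=0$ for all $2\le\ell\le c$ (so every such distribution is $1$-indistinguishable). *)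

theory Defs
  imports "HOL-Probability.Probability"
begin

definition finite_bias_dist :: "real pmf \<Rightarrow> bool" where
  "finite_bias_dist P \<longleftrightarrow> finite (set_pmf P) \<and> set_pmf P \<subseteq> {0<..<1}
     \<and> (\<forall>a. pmf P a = pmf P (1 - a))"

definition Ep :: "real pmf \<Rightarrow> (real \<Rightarrow> real) \<Rightarrow> real" where
  "Ep P g = measure_pmf.expectation P g"

definition sigma_b :: "real \<Rightarrow> real" where
  "sigma_b p = sqrt ((1 - p) / p)"

definition f_lx :: "nat \<Rightarrow> nat \<Rightarrow> real \<Rightarrow> real" where
  "f_lx l x p = p ^ x * (1 - p) ^ (l - x) *
      (real x * sigma_b p - real (l - x) * sigma_b (1 - p))"

definition R_lx :: "real pmf \<Rightarrow> nat \<Rightarrow> nat \<Rightarrow> real" where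
  "R_lx P l x = max 0 (Ep P (f_lx l x))"

definition indist :: "nat \<Rightarrow> real pmf \<Rightarrow> bool" where
  "indist c P \<longleftrightarrow> (\<forall>l. 2 \<le> l \<and> l \<le> c \<longrightarrow>
      (\<Sum>x = 1..l - 1. real (l choose x) * R_lx P l x) = 0)"

end

theory Submission
  imports Defs
begin

text \<open>Write \<open>q = 1 - p\<close>. Then \<open>f\<^sub>l\<^sub>,\<^sub>x(p) = sqrt (p q) \<cdot> d/dp (p\<^sup>x q\<^sup>l\<^sup>-\<^sup>x)\<close>, so
  Pascal's rule \<open>p\<^sup>x q\<^sup>l\<^sup>-\<^sup>x = p\<^sup>x q\<^sup>l\<^sup>+\<^sup>1\<^sup>-\<^sup>x + p\<^sup>x\<^sup>+\<^sup>1 q\<^sup>l\<^sup>-\<^sup>x\<close> yields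
  \<open>E f\<^sub>l\<^sub>,\<^sub>x = E f\<^sub>l\<^sub>+\<^sub>1\<^sub>,\<^sub>x + E f\<^sub>l\<^sub>+\<^sub>1\<^sub>,\<^sub>x\<^sub>+\<^sub>1\<close>, while the symmetry of the
  distribution yields \<open>E f\<^sub>l\<^sub>,\<^sub>x = - E f\<^sub>l\<^sub>,\<^sub>l\<^sub>-\<^sub>x\<close>. By the latter, \<open>c\<close>-indistinguishability
  means that \<open>E f\<^sub>l\<^sub>,\<^sub>x\<close> vanishes for all \<open>l \<le> c\<close> and \<open>0 < x < l\<close>. By the former,
  vanishing at level \<open>l + 1\<close> implies vanishing at level \<open>l\<close>; conversely, if level \<open>l\<close>
  vanishes, the values at level \<open>l + 1\<close> alternate in sign with constant absolute value, so a
  single zero forces all of them to vanish. At an even level the middle value is zero by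
  antisymmetry, so vanishing passes from every odd level to the next even one for free.\<close>

definition bernstein_term :: "nat \<Rightarrow> nat \<Rightarrow> real \<Rightarrow> real" where
  "bernstein_term l x p = p ^ x * (1 - p) ^ (l - x)"

text \<open>The exponents \<open>x - 1\<close> and \<open>l - x - 1\<close> truncate only where their coefficient is 0.\<close>

lemma has_real_derivative_bernstein_term:
  "(bernstein_term l x has_real_derivative
      real x * p ^ (x - 1) * (1 - p) ^ (l - x) - real (l - x) * p ^ x * (1 - p) ^ (l - x - 1)) (at p)"
  unfolding bernstein_term_def
  by (rule derivative_eq_intros refl)+ simp

lemma bernstein_term_Pascal:
  assumes "x \<le> l"
  shows "bernstein_term l x p = bernstein_term (Suc l) x p + bernstein_term (Suc l) (Suc x) p"
proof -
  have "Suc l - x = Suc (l - x)" using assms by simp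
  then show ?thesis unfolding bernstein_term_def by (simp add: algebra_simps)
qed

lemma deriv_bernstein_term_Pascal:
  assumes "x \<le> l"
  shows "deriv (bernstein_term l x) p
    = deriv (bernstein_term (Suc l) x) p + deriv (bernstein_term (Suc l) (Suc x)) p"
proof -
  have "bernstein_term l x = (\<lambda>p. bernstein_term (Suc l) x p + bernstein_term (Suc l) (Suc x) p)"
    using bernstein_term_Pascal[OF assms] by blast
  moreover have "bernstein_term m y field_differentiable at p" for m y
    using has_real_derivative_bernstein_term field_differentiable_def by blast
  ultimately show ?thesis
    by simp
qed

lemma mult_sigma_b_self:
  assumes "0 < p"
  shows "p * sigma_b p = sqrt (p * (1 - p))"
proof -
  have "p * (1 - p) = p\<^sup>2 * ((1 - p) / p)"
    using assms by (simp add: power2_eq_square)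
  then have "sqrt (p * (1 - p)) = sqrt (p\<^sup>2) * sqrt ((1 - p) / p)"
    by (simp only: real_sqrt_mult)
  then show ?thesis
    using assms unfolding sigma_b_def by simp
qed

lemma f_lx_eq_deriv_bernstein_term:
  assumes "0 < p" "p < 1"
  shows "f_lx l x p = sqrt (p * (1 - p)) * deriv (bernstein_term l x) p"
proof -
  have pow_pred: "real n * a ^ n = real n * a ^ (n - 1) * a" for n and a :: real
    by (cases n) auto
  have sigma_p: "p * sigma_b p = sqrt (p * (1 - p))"
    using mult_sigma_b_self assms by simp
  have sigma_q: "(1 - p) * sigma_b (1 - p) = sqrt (p * (1 - p))"
    using mult_sigma_b_self[of "1 - p"] assms by (simp add: mult.commute)
  have "f_lx l x p = (1 - p) ^ (l - x) * (real x * p ^ x) * sigma_b p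
      - p ^ x * (real (l - x) * (1 - p) ^ (l - x)) * sigma_b (1 - p)"
    unfolding f_lx_def by (simp add: algebra_simps)
  also have "\<dots> = (1 - p) ^ (l - x) * (real x * p ^ (x - 1)) * (p * sigma_b p)
      - p ^ x * (real (l - x) * (1 - p) ^ (l - x - 1)) * ((1 - p) * sigma_b (1 - p))"
    unfolding pow_pred[of x] pow_pred[of "l - x"] by (simp only: mult.assoc)
  also have "\<dots> = sqrt (p * (1 - p)) *
      (real x * p ^ (x - 1) * (1 - p) ^ (l - x) - real (l - x) * p ^ x * (1 - p) ^ (l - x - 1))"
    unfolding sigma_p sigma_q by (simp add: algebra_simps)
  finally show ?thesis
    using DERIV_imp_deriv[OF has_real_derivative_bernstein_term] by simp
qed

lemma f_lx_Pascal:
  assumes "0 < p" "p < 1" "x \<le> l"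
  shows "f_lx l x p = f_lx (Suc l) x p + f_lx (Suc l) (Suc x) p"
proof -
  have "f_lx l x p = sqrt (p * (1 - p)) * deriv (bernstein_term l x) p"
    using assms by (simp add: f_lx_eq_deriv_bernstein_term)
  also have "\<dots> = sqrt (p * (1 - p)) *
      (deriv (bernstein_term (Suc l) x) p + deriv (bernstein_term (Suc l) (Suc x)) p)"
    using deriv_bernstein_term_Pascal[OF assms(3)] by simp
  also have "\<dots> = f_lx (Suc l) x p + f_lx (Suc l) (Suc x) p"
    using assms by (simp add: f_lx_eq_deriv_bernstein_term distrib_left)
  finally show ?thesis .
qed

lemma f_lx_reflect:
  assumes "x \<le> l"
  shows "f_lx l x (1 - p) = - f_lx l (l - x) p"
  using assms unfolding f_lx_def by (simp add: algebra_simps)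

lemma finite_bias_distD:
  assumes "finite_bias_dist P"
  shows "finite (set_pmf P)" "\<And>p. p \<in> set_pmf P \<Longrightarrow> 0 < p \<and> p < 1"
    "\<And>a. pmf P (1 - a) = pmf P a"
  using assms unfolding finite_bias_dist_def by auto

lemma map_pmf_reflect_eq:
  fixes P :: "real pmf"
  assumes "\<And>a. pmf P (1 - a) = pmf P a"
  shows "map_pmf (\<lambda>a. 1 - a) P = P"
proof (rule pmf_eqI)
  fix a :: real
  have "pmf (map_pmf (\<lambda>a. 1 - a) P) (1 - (1 - a)) = pmf P (1 - a)"
    by (rule pmf_map_inj') (auto intro: injI)
  then show "pmf (map_pmf (\<lambda>a. 1 - a) P) a = pmf P a"
    using assms by simp
qed

lemma Ep_reflect:
  assumes "\<And>a. pmf P (1 - a) = pmf P a"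
  shows "Ep P (\<lambda>a. g (1 - a)) = Ep P g"
  using integral_map_pmf[of "\<lambda>a. 1 - a" P g] unfolding Ep_def map_pmf_reflect_eq[OF assms] ..

lemma Ep_f_lx_reflect:
  assumes "\<And>a. pmf P (1 - a) = pmf P a" "x \<le> l"
  shows "Ep P (f_lx l x) = - Ep P (f_lx l (l - x))"
proof -
  have "Ep P (f_lx l x) = Ep P (\<lambda>a. f_lx l x (1 - a))"
    by (rule Ep_reflect[OF assms(1), symmetric])
  also have "\<dots> = - Ep P (f_lx l (l - x))"
    unfolding f_lx_reflect[OF assms(2)] Ep_def by simp
  finally show ?thesis .
qed

lemma Ep_f_lx_middle:
  assumes "\<And>a. pmf P (1 - a) = pmf P a"
  shows "Ep P (f_lx (2 * m) m) = 0"
  using Ep_f_lx_reflect[OF assms, of m "2 * m"] by simp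

lemma Ep_f_lx_Pascal:
  assumes "finite_bias_dist P" "x \<le> l"
  shows "Ep P (f_lx l x) = Ep P (f_lx (Suc l) x) + Ep P (f_lx (Suc l) (Suc x))"
proof -
  note P = finite_bias_distD[OF assms(1)]
  have "Ep P (f_lx l x) = Ep P (\<lambda>p. f_lx (Suc l) x p + f_lx (Suc l) (Suc x) p)"
    unfolding Ep_def using P(2) f_lx_Pascal[OF _ _ assms(2)]
    by (intro integral_cong_AE) (auto simp: AE_measure_pmf_iff)
  then show ?thesis
    unfolding Ep_def by (simp add: integral_add integrable_measure_pmf_finite[OF P(1)])
qed

definition vanishing :: "real pmf \<Rightarrow> nat \<Rightarrow> bool" where
  "vanishing P l \<longleftrightarrow> (\<forall>x. 1 \<le> x \<and> x \<le> l - 1 \<longrightarrow> Ep P (f_lx l x) = 0)"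

lemma vanishing_le_1: "l \<le> 1 \<Longrightarrow> vanishing P l"
  unfolding vanishing_def by auto

lemma vanishing_of_half:
  assumes "\<And>a. pmf P (1 - a) = pmf P a"
    and half: "\<And>x. 1 \<le> x \<Longrightarrow> x \<le> (l - 1) div 2 \<Longrightarrow> Ep P (f_lx l x) = 0"
  shows "vanishing P l"
  unfolding vanishing_def
proof (intro allI impI)
  fix x assume x: "1 \<le> x \<and> x \<le> l - 1"
  consider "x \<le> (l - 1) div 2" | "2 * x = l" | "1 \<le> l - x" "l - x \<le> (l - 1) div 2"
    using x by linarith
  then show "Ep P (f_lx l x) = 0"
  proof cases
    case 2
    then show ?thesis using Ep_f_lx_middle[OF assms(1), of x] by simp
  next
    case 3
    then show ?thesis using half[of "l - x"] Ep_f_lx_reflect[OF assms(1), of x l] x by simp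
  qed (use x half in simp)
qed

lemma vanishing_SucD:
  assumes P: "finite_bias_dist P" and van: "vanishing P (Suc l)"
  shows "vanishing P l"
  unfolding vanishing_def
proof (intro allI impI)
  fix x assume x: "1 \<le> x \<and> x \<le> l - 1"
  then have "Ep P (f_lx (Suc l) x) = 0" "Ep P (f_lx (Suc l) (Suc x)) = 0"
    using van unfolding vanishing_def by auto
  moreover have "x \<le> l"
    using x by linarith
  ultimately show "Ep P (f_lx l x) = 0"
    using Ep_f_lx_Pascal[OF P, of x l] by simp
qed

lemma vanishing_antimono:
  assumes "finite_bias_dist P" "vanishing P m" "l \<le> m"
  shows "vanishing P l"
  using assms(3,2)
proof (induction rule: inc_induct)
  case (step n)
  then have "vanishing P (Suc n)"
    by simp
  then show ?case
    by (rule vanishing_SucD[OF assms(1)])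
qed

lemma sum_R_lx_eq_0_iff:
  assumes "\<And>a. pmf P (1 - a) = pmf P a"
  shows "(\<Sum>x = 1..l - 1. real (l choose x) * R_lx P l x) = 0 \<longleftrightarrow> vanishing P l"
proof -
  have "(\<Sum>x = 1..l - 1. real (l choose x) * R_lx P l x) = 0
      \<longleftrightarrow> (\<forall>x \<in> {1..l - 1}. Ep P (f_lx l x) \<le> 0)"
    by (subst sum_nonneg_eq_0_iff) (auto simp: R_lx_def)
  also have "\<dots> \<longleftrightarrow> vanishing P l"
    unfolding vanishing_def
  proof safe
    fix x assume nonpos: "\<forall>x \<in> {1..l - 1}. Ep P (f_lx l x) \<le> 0" and x: "1 \<le> x" "x \<le> l - 1"
    moreover have "l - x \<in> {1..l - 1}"
      using x by auto
    ultimately have "Ep P (f_lx l x) \<le> 0" "Ep P (f_lx l (l - x)) \<le> 0"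
      using x by auto
    then show "Ep P (f_lx l x) = 0"
      using Ep_f_lx_reflect[OF assms, of x l] x by simp
  qed auto
  finally show ?thesis .
qed

lemma indist_iff_vanishing:
  assumes P: "finite_bias_dist P"
  shows "indist c P \<longleftrightarrow> vanishing P c"
proof
  assume indist: "indist c P"
  show "vanishing P c"
  proof (cases "2 \<le> c")
    case True
    then show ?thesis
      using indist sum_R_lx_eq_0_iff[OF finite_bias_distD(3)[OF P]] unfolding indist_def by blast
  qed (simp add: vanishing_le_1)
next
  assume "vanishing P c"
  then show "indist c P"
    using sum_R_lx_eq_0_iff[OF finite_bias_distD(3)[OF P]] vanishing_antimono[OF P]
    unfolding indist_def by blast
qed

lemma vanishing_Suc_of_zero:
  assumes P: "finite_bias_dist P" and van: "vanishing P l"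
    and x0: "1 \<le> x0" "x0 \<le> l" and zero: "Ep P (f_lx (Suc l) x0) = 0"
  shows "vanishing P (Suc l)"
proof -
  define g where "g x = Ep P (f_lx (Suc l) x)" for x
  have alternate: "g (Suc x) = - g x" if "1 \<le> x" "x < l" for x
    using Ep_f_lx_Pascal[OF P, of x l] van that unfolding vanishing_def g_def by simp
  have abs_eq: "\<bar>g x\<bar> = \<bar>g y\<bar>" if "1 \<le> x" "x \<le> y" "y \<le> l" for x y
    using that(2,3) by (induction y rule: dec_induct) (use that(1) alternate in auto)
  have "\<bar>g x\<bar> = \<bar>g x0\<bar>" if "1 \<le> x" "x \<le> l" for x
  proof (cases "x \<le> x0")
    case True
    show ?thesis by (rule abs_eq) (use True that x0 in auto)
  next
    case False
    then show ?thesis using abs_eq[of x0 x] that x0 by auto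
  qed
  then have "g x = 0" if "1 \<le> x" "x \<le> l" for x
    using that zero unfolding g_def by force
  then show ?thesis
    unfolding vanishing_def g_def by simp
qed

lemma vanishing_Suc_if_odd:
  assumes "finite_bias_dist P" "odd l" "vanishing P l"
  shows "vanishing P (Suc l)"
proof -
  obtain m where "l = 2 * m + 1"
    using assms(2) oddE by blast
  then show ?thesis
    using vanishing_Suc_of_zero[OF assms(1,3), of "Suc m"]
      Ep_f_lx_middle[OF finite_bias_distD(3)[OF assms(1)], of "Suc m"] by simp
qed

lemma vanishing_odd_of_zero:
  assumes P: "finite_bias_dist P" and "odd l" "3 \<le> l" and "vanishing P (l - 2)"
    and x0: "1 \<le> x0" "x0 \<le> l - 1" "Ep P (f_lx l x0) = 0"
  shows "vanishing P l"
proof -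
  have "Suc (l - 2) = l - 1" "Suc (l - 1) = l"
    using assms(3) by simp_all
  moreover have "odd (l - 2)"
    using assms(2,3) by simp
  ultimately have "vanishing P (l - 1)"
    using vanishing_Suc_if_odd[OF P _ assms(4)] by simp
  then show ?thesis
    using vanishing_Suc_of_zero[OF P _ x0(1,2)] x0(3) \<open>Suc (l - 1) = l\<close> by simp
qed

lemma vanishing_of_odd_zeros:
  assumes "finite_bias_dist P"
    and "\<And>l. odd l \<Longrightarrow> 3 \<le> l \<Longrightarrow> l \<le> n \<Longrightarrow> \<exists>x. 1 \<le> x \<and> x \<le> l - 1 \<and> Ep P (f_lx l x) = 0"
  shows "vanishing P n"
  using assms(2)
proof (induction n)
  case 0
  then show ?case by (simp add: vanishing_le_1)
next
  case (Suc n)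
  then have van: "vanishing P n" by simp
  have "odd n \<or> n = 0 \<or> odd (Suc n) \<and> 3 \<le> Suc n"
    by presburger
  then consider "odd n" | "n = 0" | "odd (Suc n)" "3 \<le> Suc n"
    by blast
  then show ?case
  proof cases
    case 1
    then show ?thesis using vanishing_Suc_if_odd[OF assms(1) _ van] by simp
  next
    case 2
    then show ?thesis by (simp add: vanishing_le_1)
  next
    case 3
    then have "\<exists>x. 1 \<le> x \<and> x \<le> Suc n - 1 \<and> Ep P (f_lx (Suc n) x) = 0"
      by (intro Suc.prems) auto
    then obtain x where "1 \<le> x" "x \<le> n" "Ep P (f_lx (Suc n) x) = 0"
      by auto
    then show ?thesis by (rule vanishing_Suc_of_zero[OF assms(1) van])
  qed
qed

theorem proposition5:
  fixes c c' :: nat and P :: "real pmf"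
  assumes "c \<ge> 3"
    and "c' = (if odd c then c else c - 1)"
    and "finite_bias_dist P"
  shows "((\<forall>x. 1 \<le> x \<and> x \<le> (c' - 1) div 2 \<longrightarrow> Ep P (f_lx c' x) = 0) \<longrightarrow> indist c P)
       \<and> ((indist (c' - 2) P \<and> (\<exists>x0. 1 \<le> x0 \<and> x0 \<le> c' - 1 \<and> Ep P (f_lx c' x0) = 0))
            \<longrightarrow> indist c P)
       \<and> ((\<forall>l. odd l \<and> 3 \<le> l \<and> l \<le> c' \<longrightarrow>
              (\<exists>xl. 1 \<le> xl \<and> xl \<le> l - 1 \<and> Ep P (f_lx l xl) = 0)) \<longrightarrow> indist c P)"
proof -
  note P = assms(3)
  have c': "odd c'" "3 \<le> c'" "c = c' \<or> c = Suc c'"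
    using assms(1,2) by presburger+
  have indist_c: "indist c P" if "vanishing P c'"
    using c'(3) vanishing_Suc_if_odd[OF P c'(1) that] that indist_iff_vanishing[OF P] by auto
  have "(\<forall>x. 1 \<le> x \<and> x \<le> (c' - 1) div 2 \<longrightarrow> Ep P (f_lx c' x) = 0) \<longrightarrow> indist c P"
    by (intro impI indist_c vanishing_of_half[OF finite_bias_distD(3)[OF P]]) auto
  moreover have "indist (c' - 2) P \<and> (\<exists>x0. 1 \<le> x0 \<and> x0 \<le> c' - 1 \<and> Ep P (f_lx c' x0) = 0)
      \<longrightarrow> indist c P"
    using vanishing_odd_of_zero[OF P c'(1,2)] indist_iff_vanishing[OF P] indist_c by blast
  moreover have "(\<forall>l. odd l \<and> 3 \<le> l \<and> l \<le> c' \<longrightarrow>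
      (\<exists>xl. 1 \<le> xl \<and> xl \<le> l - 1 \<and> Ep P (f_lx l xl) = 0)) \<longrightarrow> indist c P"
    by (intro impI indist_c vanishing_of_odd_zeros[OF P]) auto
  ultimately show ?thesis
    by blast
qed

end
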